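(* If $\Pi\vdash_P M:A\mid\Sigma$ is derivable in Parigot's simply typed $\lambda\mu$-calculus, then $\Pi^D\vdash M:A^D\mid\Sigma^C$ is derivable in the intersection type assignment system.
   Context: $\lambda\mu$ terms and commands: $M::=x\mid\lambda x.M\mid MN\mid\mu\alpha.\mathsf C$ and $\mathsf C::=[\alpha]M$. Parigot's system. Formulas: $A,B::=\varphi\mid A\to B$, with $\varphi$ ranging over propositional variables. Judgements have the form $\Pi\vdash_P M:A\mid\Sigma$, where $\Pi$ (resp. $\Sigma$) is a finite map from term variables (resp. names) to formulas. The rules are: - (Ax) $\Pi,x{:}A\vdash_P x:A\mid\Sigma$. - ($\to$I) From $\Pi,x{:}A\vdash_P M:B\mid\Sigma$, infer $\Pi\vdash_P\lambda x.M:A\to B\mid\Sigma$. - ($\to$E) From $\Pi\vdash_P M:A\to B\mid\Sigma$ and $\Pi\vdash_P N:A\mid\Sigma$, infer $\Pi\vdash_P MN:B\mid\Sigma$. - ($\mu_1$) From $\Pi\vdash_P M:A\mid\alpha{:}A,\Sigma$, infer $\Pi\vdash_P\mu\alpha.[\alpha]M:A\mid\Sigma$. - ($\mu_2$) From $\Pi\vdash_P M:B\mid\alpha{:}A,\beta{:}B,\Sigma$, infer $\Pi\vdash_P\mu\alpha.[\beta]M:A\mid\beta{:}B,\Sigma$. Intersection types. $R=\{\bot\sqsubset\top\}$ and $\psi=\psi_\top$. - $\Lambda_R$: $\rho::=\psi_a\mid\omega\mid\rho\wedge\rho$; - $\Lambda_D$: $\delta::=\rho\mid\kappa\to\rho\mid\omega\mid\delta\wedge\delta$;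 - $\Lambda_C$: $\kappa::=\delta\times\kappa\mid\omega\mid\kappa\wedge\kappa$. The relations $\le_R,\le_D,\le_C$ are the least reflexive, transitive relations with $\sigma\wedge\tau\le\sigma,\tau$, $\sigma\le\omega$, $\rho\le\sigma,\tau\Rightarrow\rho\le\sigma\wedge\tau$, and additionally: - $\psi_\bot\sim\omega$ and $\psi_{a\sqcup b}\sim\psi_a\wedge\psi_b$; - $\le_R\subseteq\le_D$; - $\omega\le_D\omega\to\omega$; - $\psi_a\le_D\omega\to\psi_a\le_D\psi_a$; - $\omega\le_C\omega\times\omega$; - $(\kappa\to\rho_1)\wedge(\kappa\to\rho_2)\le_D\kappa\to(\rho_1\wedge\rho_2)$; - $(\delta_1\times\kappa_1)\wedge(\delta_2\times\kappa_2)\le_C(\delta_1\wedge\delta_2)\times(\kappa_1\wedge\kappa_2)$; - $\to$ is contravariant in $\Lambda_C$ and covariant in $\Lambda_R$; - $\times$ is covariant in both arguments. Type assignment. Bases $\Gamma$ are finite maps from variables to $\Lambda_D$, and contexts $\Delta$ are finite maps from names to $\Lambda_C$. $\Gamma(x)$ and $\Delta(\alpha)$ are $\omega$ outside the domain. The rules are: - (Ax) $\Gamma,x{:}\delta\vdash x:\delta\mid\Delta$. - (Abs) From $\Gamma\vdash M:\kappa\to\rho\mid\Delta$, $\Gamma(x)=\delta$, infer $\Gamma\setminus x\vdash\lambda x.M:(\delta\times\kappa)\to\rho\mid\Delta$. - (App) From $\Gamma\vdash M:(\delta\times\kappa)\to\rho\mid\Delta$ and $\Gamma\vdash N:\delta\mid\Delta$,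 infer $\Gamma\vdash MN:\kappa\to\rho\mid\Delta$. - (Cmd) From $\Gamma\vdash M:\delta\mid\Delta$, $\Delta(\alpha)=\kappa$, infer $\Gamma\vdash[\alpha]M:\delta\times\kappa\mid\Delta$. - ($\mu$) From $\Gamma\vdash\mathsf C:(\kappa'\to\rho)\times\kappa'\mid\Delta$, $\Delta(\alpha)=\kappa$, infer $\Gamma\vdash\mu\alpha.\mathsf C:\kappa\to\rho\mid\Delta\setminus\alpha$. - ($\wedge$), ($\omega$) and ($\le$). Translation: - $\varphi^C=\psi\times\omega$; - $(A\to B)^C=(A^C\to\psi)\times B^C$; - $A^D=A^C\to\psi$; - $\Pi^D=\{x{:}A^D\mid x{:}A\in\Pi\}$ and $\Sigma^C=\{\alpha{:}A^C\mid\alpha{:}A\in\Sigma\}$. *)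

theory Defs
  imports Main
begin

type_synonym var = nat
type_synonym name = nat

datatype trm = Var var | Lam var trm | App trm trm | Mu name cmd
     and cmd = Cmd name trm   (* [alpha]M *)

datatype form = PV nat | Imp form form

text \<open>Judgement  Pi |-_P M : A | Sigma.  The extension "Pi, x:A" is read as a
 disjoint extension (x not in the domain of Pi), as usual.\<close>
inductive parigot :: "(var \<rightharpoonup> form) \<Rightarrow> trm \<Rightarrow> form \<Rightarrow> (name \<rightharpoonup> form) \<Rightarrow> bool" where
  P_Ax: "\<Pi> x = Some A \<Longrightarrow> parigot \<Pi> (Var x) A \<Sigma>"
| P_ImpI: "x \<notin> dom \<Pi> \<Longrightarrow> parigot (\<Pi>(x \<mapsto> A)) M B \<Sigma> \<Longrightarrow> parigot \<Pi> (Lam x M) (Imp A B) \<Sigma>"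
| P_ImpE: "parigot \<Pi> M (Imp A B) \<Sigma> \<Longrightarrow> parigot \<Pi> N A \<Sigma> \<Longrightarrow> parigot \<Pi> (App M N) B \<Sigma>"
| P_Mu1: "\<alpha> \<notin> dom \<Sigma> \<Longrightarrow> parigot \<Pi> M A (\<Sigma>(\<alpha> \<mapsto> A)) \<Longrightarrow> parigot \<Pi> (Mu \<alpha> (Cmd \<alpha> M)) A \<Sigma>"
| P_Mu2: "\<Sigma> \<beta> = Some B \<Longrightarrow> \<alpha> \<notin> dom \<Sigma> \<Longrightarrow> parigot \<Pi> M B (\<Sigma>(\<alpha> \<mapsto> A)) \<Longrightarrow>
          parigot \<Pi> (Mu \<alpha> (Cmd \<beta> M)) A \<Sigma>"

text \<open>The lattice R = {bot < top}.\<close>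
datatype elem = Bot | Top

fun join :: "elem \<Rightarrow> elem \<Rightarrow> elem" where
  "join Bot b = b"
| "join Top b = Top"

text \<open>Raw syntax of types; the sorts Lambda_R, Lambda_D, Lambda_C are carved out
 by the predicates isR, isD, isC (omega and intersection are shared symbols).\<close>
datatype ty = Psi elem | Om | And ty ty | Arr ty ty | Times ty ty

fun isR :: "ty \<Rightarrow> bool" where
  "isR (Psi a) = True"
| "isR Om = True"
| "isR (And s t) = (isR s \<and> isR t)"
| "isR (Arr _ _) = False"
| "isR (Times _ _) = False"

fun isD :: "ty \<Rightarrow> bool" and isC :: "ty \<Rightarrow> bool" where
  "isD (Psi a) = True"
| "isD Om = True"
| "isD (And s t) = (isD s \<and> isD t)"
| "isD (Arr k r) = (isC k \<and> isR r)"
| "isD (Times _ _) = False"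
| "isC (Psi a) = False"
| "isC Om = True"
| "isC (And s t) = (isC s \<and> isC t)"
| "isC (Arr _ _) = False"
| "isC (Times d k) = (isD d \<and> isC k)"

abbreviation psi :: ty where "psi \<equiv> Psi Top"

inductive leR :: "ty \<Rightarrow> ty \<Rightarrow> bool" where
  R_refl: "isR s \<Longrightarrow> leR s s"
| R_trans: "leR s t \<Longrightarrow> leR t u \<Longrightarrow> leR s u"
| R_andL: "isR s \<Longrightarrow> isR t \<Longrightarrow> leR (And s t) s"
| R_andR: "isR s \<Longrightarrow> isR t \<Longrightarrow> leR (And s t) t"
| R_om: "isR s \<Longrightarrow> leR s Om"
| R_glb: "leR r s \<Longrightarrow> leR r t \<Longrightarrow> leR r (And s t)"
| R_bot1: "leR (Psi Bot) Om"
| R_bot2: "leR Om (Psi Bot)"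
| R_join1: "leR (Psi (join a b)) (And (Psi a) (Psi b))"
| R_join2: "leR (And (Psi a) (Psi b)) (Psi (join a b))"

inductive leD :: "ty \<Rightarrow> ty \<Rightarrow> bool" and leC :: "ty \<Rightarrow> ty \<Rightarrow> bool" where
  D_refl: "isD s \<Longrightarrow> leD s s"
| D_trans: "leD s t \<Longrightarrow> leD t u \<Longrightarrow> leD s u"
| D_andL: "isD s \<Longrightarrow> isD t \<Longrightarrow> leD (And s t) s"
| D_andR: "isD s \<Longrightarrow> isD t \<Longrightarrow> leD (And s t) t"
| D_om: "isD s \<Longrightarrow> leD s Om"
| D_glb: "leD r s \<Longrightarrow> leD r t \<Longrightarrow> leD r (And s t)"
| D_R: "leR s t \<Longrightarrow> leD s t"
| D_omarr: "leD Om (Arr Om Om)"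
| D_psi1: "leD (Psi a) (Arr Om (Psi a))"
| D_psi2: "leD (Arr Om (Psi a)) (Psi a)"
| D_arrand: "isC k \<Longrightarrow> isR r1 \<Longrightarrow> isR r2 \<Longrightarrow>
             leD (And (Arr k r1) (Arr k r2)) (Arr k (And r1 r2))"
| D_arr: "leC k' k \<Longrightarrow> leR r r' \<Longrightarrow> leD (Arr k r) (Arr k' r')"
| C_refl: "isC s \<Longrightarrow> leC s s"
| C_trans: "leC s t \<Longrightarrow> leC t u \<Longrightarrow> leC s u"
| C_andL: "isC s \<Longrightarrow> isC t \<Longrightarrow> leC (And s t) s"
| C_andR: "isC s \<Longrightarrow> isC t \<Longrightarrow> leC (And s t) t"
| C_om: "isC s \<Longrightarrow> leC s Om"
| C_glb: "leC r s \<Longrightarrow> leC r t \<Longrightarrow> leC r (And s t)"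
| C_omtimes: "leC Om (Times Om Om)"
| C_timesand: "isD d1 \<Longrightarrow> isD d2 \<Longrightarrow> isC k1 \<Longrightarrow> isC k2 \<Longrightarrow>
               leC (And (Times d1 k1) (Times d2 k2)) (Times (And d1 d2) (And k1 k2))"
| C_times: "leD d d' \<Longrightarrow> leC k k' \<Longrightarrow> leC (Times d k) (Times d' k')"

text \<open>Bases and contexts are finite partial maps; outside the domain the type is omega.\<close>
definition lookup :: "('a \<rightharpoonup> ty) \<Rightarrow> 'a \<Rightarrow> ty" where
  "lookup m a = (case m a of None \<Rightarrow> Om | Some t \<Rightarrow> t)"

inductive itT :: "(var \<rightharpoonup> ty) \<Rightarrow> trm \<Rightarrow> ty \<Rightarrow> (name \<rightharpoonup> ty) \<Rightarrow> bool"
      and itC :: "(var \<rightharpoonup> ty) \<Rightarrow> cmd \<Rightarrow> ty \<Rightarrow> (name \<rightharpoonup> ty) \<Rightarrow> bool" where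
  I_Ax: "\<Gamma> x = Some d \<Longrightarrow> itT \<Gamma> (Var x) d \<Delta>"
| I_Abs: "itT \<Gamma> M (Arr k r) \<Delta> \<Longrightarrow> itT (\<Gamma>(x := None)) (Lam x M) (Arr (Times (lookup \<Gamma> x) k) r) \<Delta>"
| I_App: "itT \<Gamma> M (Arr (Times d k) r) \<Delta> \<Longrightarrow> itT \<Gamma> N d \<Delta> \<Longrightarrow> itT \<Gamma> (App M N) (Arr k r) \<Delta>"
| I_Cmd: "itT \<Gamma> M d \<Delta> \<Longrightarrow> itC \<Gamma> (Cmd \<alpha> M) (Times d (lookup \<Delta> \<alpha>)) \<Delta>"
| I_Mu: "itC \<Gamma> C (Times (Arr k' r) k') \<Delta> \<Longrightarrow> itT \<Gamma> (Mu \<alpha> C) (Arr (lookup \<Delta> \<alpha>) r) (\<Delta>(\<alpha> := None))"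
| I_AndT: "itT \<Gamma> M s \<Delta> \<Longrightarrow> itT \<Gamma> M t \<Delta> \<Longrightarrow> itT \<Gamma> M (And s t) \<Delta>"
| I_OmT: "itT \<Gamma> M Om \<Delta>"
| I_LeT: "itT \<Gamma> M s \<Delta> \<Longrightarrow> leD s t \<Longrightarrow> itT \<Gamma> M t \<Delta>"
| I_AndC: "itC \<Gamma> C s \<Delta> \<Longrightarrow> itC \<Gamma> C t \<Delta> \<Longrightarrow> itC \<Gamma> C (And s t) \<Delta>"
| I_OmC: "itC \<Gamma> C Om \<Delta>"
| I_LeC: "itC \<Gamma> C s \<Delta> \<Longrightarrow> leC s t \<Longrightarrow> itC \<Gamma> C t \<Delta>"

fun trC :: "form \<Rightarrow> ty" where
  "trC (PV n) = Times psi Om"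
| "trC (Imp A B) = Times (Arr (trC A) psi) (trC B)"

definition trD :: "form \<Rightarrow> ty" where
  "trD A = Arr (trC A) psi"

definition trBase :: "(var \<rightharpoonup> form) \<Rightarrow> (var \<rightharpoonup> ty)" where
  "trBase \<Pi> = map_option trD \<circ> \<Pi>"

definition trCtx :: "(name \<rightharpoonup> form) \<Rightarrow> (name \<rightharpoonup> ty)" where
  "trCtx \<Sigma> = map_option trC \<circ> \<Sigma>"

end

theory Submission
  imports Defs
begin

text \<open>The translation is compositional: each Parigot rule is matched by one rule of the
  intersection system, with \<open>A\<^sup>D = A\<^sup>C \<rightarrow> \<psi>\<close> supplying exactly the arrow
  shape required by (Abs), (App) and (\<mu>). The only bookkeeping is that the binder removed
  by (Abs) or (\<mu>) is fresh, so deleting it from the translated base or context gives back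
  the translation of the smaller one.\<close>

lemma lookup_upd_same [simp]: "lookup (m(x \<mapsto> t)) x = t"
  by (simp add: lookup_def)

lemma lookup_eq_Some: "m x = Some t \<Longrightarrow> lookup m x = t"
  by (simp add: lookup_def)

lemma trBase_upd [simp]: "trBase (\<Pi>(x \<mapsto> A)) = (trBase \<Pi>)(x \<mapsto> trD A)"
  by (simp add: trBase_def)

lemma trCtx_upd [simp]: "trCtx (\<Sigma>(\<alpha> \<mapsto> A)) = (trCtx \<Sigma>)(\<alpha> \<mapsto> trC A)"
  by (simp add: trCtx_def)

lemma dom_trBase [simp]: "dom (trBase \<Pi>) = dom \<Pi>"
  by (simp add: trBase_def)

lemma dom_trCtx [simp]: "dom (trCtx \<Sigma>) = dom \<Sigma>"
  by (simp add: trCtx_def)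

lemma itT_Lam_trD:
  assumes "x \<notin> dom \<Pi>" and "itT (trBase (\<Pi>(x \<mapsto> A))) M (trD B) \<Delta>"
  shows "itT (trBase \<Pi>) (Lam x M) (trD (Imp A B)) \<Delta>"
proof -
  have "itT ((trBase (\<Pi>(x \<mapsto> A)))(x := None)) (Lam x M)
          (Arr (Times (lookup (trBase (\<Pi>(x \<mapsto> A))) x) (trC B)) psi) \<Delta>"
    using assms(2) unfolding trD_def by (rule I_Abs)
  then show ?thesis
    using assms(1) by (simp add: trD_def)
qed

lemma itT_App_trD:
  assumes "itT \<Gamma> M (trD (Imp A B)) \<Delta>" and "itT \<Gamma> N (trD A) \<Delta>"
  shows "itT \<Gamma> (App M N) (trD B) \<Delta>"
  using assms unfolding trD_def by (auto intro: I_App)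

text \<open>Covers both (\<open>\<mu>\<^sub>1\<close>), where \<open>\<beta> = \<alpha>\<close>, and (\<open>\<mu>\<^sub>2\<close>).\<close>

lemma itT_Mu_trD:
  assumes "\<alpha> \<notin> dom \<Sigma>" and "(\<Sigma>(\<alpha> \<mapsto> A)) \<beta> = Some B"
    and "itT \<Gamma> M (trD B) (trCtx (\<Sigma>(\<alpha> \<mapsto> A)))"
  shows "itT \<Gamma> (Mu \<alpha> (Cmd \<beta> M)) (trD A) (trCtx \<Sigma>)"
proof -
  let ?\<Delta> = "trCtx (\<Sigma>(\<alpha> \<mapsto> A))"
  have "lookup ?\<Delta> \<beta> = trC B"
    using assms(2) by (intro lookup_eq_Some) (auto simp: trCtx_def split: if_splits)
  with I_Cmd[where \<alpha> = \<beta>, OF assms(3)]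
  have "itC \<Gamma> (Cmd \<beta> M) (Times (Arr (trC B) psi) (trC B)) ?\<Delta>"
    by (simp only: trD_def)
  then have "itT \<Gamma> (Mu \<alpha> (Cmd \<beta> M)) (Arr (lookup ?\<Delta> \<alpha>) psi) (?\<Delta>(\<alpha> := None))"
    by (rule I_Mu)
  then show ?thesis
    using assms(1) by (simp add: trD_def)
qed

lemma parigot_imp_itT_trD:
  "parigot \<Pi> M A \<Sigma> \<Longrightarrow> itT (trBase \<Pi>) M (trD A) (trCtx \<Sigma>)"
proof (induction rule: parigot.induct)
  case (P_Ax \<Pi> x A \<Sigma>)
  then show ?case by (intro I_Ax) (simp add: trBase_def)
next
  case (P_ImpI x \<Pi> A M B \<Sigma>)
  show ?case using P_ImpI.hyps(1) P_ImpI.IH by (rule itT_Lam_trD)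
next
  case (P_ImpE \<Pi> M A B \<Sigma> N)
  show ?case using P_ImpE.IH by (rule itT_App_trD)
next
  case (P_Mu1 \<alpha> \<Sigma> \<Pi> M A)
  show ?case by (rule itT_Mu_trD[OF P_Mu1.hyps(1) _ P_Mu1.IH]) simp
next
  case (P_Mu2 \<Sigma> \<beta> B \<alpha> \<Pi> M A)
  have "\<beta> \<noteq> \<alpha>" using P_Mu2.hyps(1,2) by auto
  then show ?case
    using P_Mu2.hyps(1) by (intro itT_Mu_trD[OF P_Mu2.hyps(2) _ P_Mu2.IH]) simp
qed

theorem theorem7p4:
  assumes "finite (dom \<Pi>)" and "finite (dom \<Sigma>)"
    and "parigot \<Pi> M A \<Sigma>"
  shows "itT (trBase \<Pi>) M (trD A) (trCtx \<Sigma>)"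
  using assms(3) by (rule parigot_imp_itT_trD)

end
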